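(* Let $\lambda \geq 0$, $0\leq \beta<1$, $\tau \in \mathbb{C}\setminus\{0\}$ and $m \in \mathbb{N}$. Let $f(z)=z+\sum_{k=1}^{\infty} a_{mk+1}z^{mk+1}$ belong to $\Theta_{\Sigma_m}(\tau,\lambda,0,0;\beta)$ (the case $\gamma=\delta=0$). Then $$|a_{m+1}| \leq \min\left\{\frac{2|\tau|(1-\beta)}{1+m\lambda},\ 2\sqrt{\frac{|\tau|(1-\beta)}{(m+1)(1+2m\lambda)}}\right\}\quad\text{and}\quad |a_{2m+1}| \leq \frac{2|\tau|(1-\beta)}{1+2m\lambda}.$$
   Context: Let $\mathbb{U}=\{z\in\mathbb{C}:|z|<1\}$ and $m\in\mathbb{N}$. $\mathcal{A}_m$ denotes the class of functions analytic in $\mathbb{U}$ of the form $f(z)=z+\sum_{k=1}^{\infty}a_{mk+1}z^{mk+1}$. $\Sigma_m$ denotes the class of $m$-fold symmetric bi-univalent functions: functions $f\in\mathcal{A}_m$ univalent in $\mathbb{U}$ whose inverse $f^{-1}$ extends to a univalent function $g$ on $\mathbb{U}$; this $g$ has the expansion $g(w)=w-a_{m+1}w^{m+1}+\left[(m+1)a_{m+1}^2-a_{2m+1}\right]w^{2m+1}-\cdots$. For $\delta\in\mathbb{N}_0$ and $h(z)=z+\sum_{k\ge1}c_{mk+1}z^{mk+1}$ analytic in $\mathbb{U}$, the $m$-fold Ruscheweyh derivative is $\mathcal{R}^\delta h(z)=z+\sum_{k=1}^{\infty}\frac{\Gamma(\delta+k+1)}{\Gamma(k+1)\Gamma(\delta+1)}c_{mk+1}z^{mk+1}$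 (for $\delta=0$ it is the identity). For such $h$ and parameters $\lambda,\gamma,\tau\neq0,\delta$, put $$J_h(z)=1+\frac{1}{\tau}\Big[(1-\lambda)(1-\gamma)\frac{\mathcal{R}^\delta h(z)}{z}+(\lambda(\gamma+1)+\gamma)(\mathcal{R}^\delta h)'(z)+\lambda\gamma\big(z(\mathcal{R}^\delta h)''(z)-2\big)-1\Big].$$ For $0\le\beta<1$, $\Theta_{\Sigma_m}(\tau,\lambda,\gamma,\delta;\beta)$ is the set of $f\in\Sigma_m$ such that $\operatorname{Re}J_f(z)>\beta$ for all $z\in\mathbb{U}$ and $\operatorname{Re}J_g(w)>\beta$ for all $w\in\mathbb{U}$, where $g$ is the extension of $f^{-1}$ to $\mathbb{U}$. *)

theory Defs
  imports "HOL-Complex_Analysis.Complex_Analysis"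
begin

definition coef :: "(complex \<Rightarrow> complex) \<Rightarrow> nat \<Rightarrow> complex" where
  "coef h n = (deriv ^^ n) h 0 / of_nat (fact n)"

definition in_A :: "nat \<Rightarrow> (complex \<Rightarrow> complex) \<Rightarrow> bool" where
  "in_A m f \<longleftrightarrow> f holomorphic_on ball 0 1 \<and> coef f 0 = 0 \<and> coef f 1 = 1 \<and>
     (\<forall>n. n \<noteq> 1 \<and> \<not> (\<exists>k\<ge>1. n = m * k + 1) \<longrightarrow> coef f n = 0)"

definition inv_extension :: "(complex \<Rightarrow> complex) \<Rightarrow> (complex \<Rightarrow> complex) \<Rightarrow> bool" where
  "inv_extension f g \<longleftrightarrow> g holomorphic_on ball 0 1 \<and> inj_on g (ball 0 1) \<and>
     (\<forall>z\<in>ball 0 1. f z \<in> ball 0 1 \<longrightarrow> g (f z) = z)"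

definition Sigma_m :: "nat \<Rightarrow> (complex \<Rightarrow> complex) \<Rightarrow> bool" where
  "Sigma_m m f \<longleftrightarrow> in_A m f \<and> inj_on f (ball 0 1) \<and> (\<exists>g. inv_extension f g)"

text \<open>m-fold Ruscheweyh derivative (Gamma ratio = binomial coefficient for delta in N_0).\<close>
definition ruscheweyh :: "nat \<Rightarrow> nat \<Rightarrow> (complex \<Rightarrow> complex) \<Rightarrow> complex \<Rightarrow> complex" where
  "ruscheweyh m \<delta> h z = z + (\<Sum>k. of_nat ((\<delta> + Suc k) choose (Suc k)) * coef h (m * Suc k + 1)
        * z ^ (m * Suc k + 1))"

text \<open>The functional J_h; R h(z)/z is read as its removable value 1 at z = 0.\<close>
definition J_fun :: "nat \<Rightarrow> complex \<Rightarrow> real \<Rightarrow> real \<Rightarrow> nat \<Rightarrow> (complex \<Rightarrow> complex) \<Rightarrow> complex \<Rightarrow> complex" where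
  "J_fun m \<tau> lam \<gamma> \<delta> h z =
     (let R = ruscheweyh m \<delta> h in
      1 + (1 / \<tau>) * ((1 - of_real lam) * (1 - of_real \<gamma>) * (if z = 0 then 1 else R z / z)
        + (of_real lam * (of_real \<gamma> + 1) + of_real \<gamma>) * deriv R z
        + of_real lam * of_real \<gamma> * (z * deriv (deriv R) z - 2) - 1))"

definition Theta_Sigma :: "nat \<Rightarrow> complex \<Rightarrow> real \<Rightarrow> real \<Rightarrow> nat \<Rightarrow> real \<Rightarrow> (complex \<Rightarrow> complex) \<Rightarrow> bool" where
  "Theta_Sigma m \<tau> lam \<gamma> \<delta> \<beta> f \<longleftrightarrow> Sigma_m m f \<and>
     (\<forall>z\<in>ball 0 1. Re (J_fun m \<tau> lam \<gamma> \<delta> f z) > \<beta>) \<and>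
     (\<exists>g. inv_extension f g \<and> (\<forall>w\<in>ball 0 1. Re (J_fun m \<tau> lam \<gamma> \<delta> g w) > \<beta>))"

end

theory Submission
  imports Defs
begin

(* For gamma = delta = 0 the functional J_h - beta is a holomorphic function on the disc with
   positive real part and value 1 - beta at 0, and its n-th Taylor coefficient is
   (1 + n lam) c_(n+1) / tau whenever m divides n (c_k the Taylor coefficients of h).
   Caratheodory's lemma |p_n| <= 2 Re p(0), applied to f and to the extension g of its inverse,
   bounds (1 + m lam)|a_(m+1)|, (1 + 2m lam)|a_(2m+1)| and (1 + 2m lam)|b_(2m+1)| by
   2|tau|(1 - beta).  Inverting the m-fold symmetric series of f gives
   b_(2m+1) = (m+1) a_(m+1)^2 - a_(2m+1), so adding the last two bounds yields the
   square-root estimate for |a_(m+1)|. *)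

lemma has_integral_circle_div_cis_power:
  fixes p :: "complex \<Rightarrow> complex" and r :: real
  assumes hol: "p holomorphic_on ball 0 1" and r: "0 < r" "r < 1"
  shows "((\<lambda>t. p (r * cis t) / cis t ^ n) has_integral (2 * pi * r ^ n * coef p n)) {0..2*pi}"
proof -
  have "continuous_on (cball 0 r) p"
    by (rule continuous_on_subset[OF holomorphic_on_imp_continuous_on[OF hol]]) (use r in auto)
  moreover have "p holomorphic_on ball 0 r"
    by (rule holomorphic_on_subset[OF hol]) (use r in auto)
  ultimately have "((\<lambda>u. p u / (u - 0) ^ Suc n) has_contour_integral (2 * pi * \<i> / fact n * (deriv ^^ n) p 0))
      (circlepath 0 r)"
    using r by (intro Cauchy_has_contour_integral_higher_derivative_circlepath) auto
  then have "((\<lambda>t. p (r * cis t) / (r * cis t) ^ Suc n * r * \<i> * cis t) has_integral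
      (2 * pi * \<i> * coef p n)) {0..2*pi}"
    unfolding circlepath_def coef_def
    by (subst (asm) has_contour_integral_part_circlepath_iff) auto
  moreover have "p (r * cis t) / (r * cis t) ^ Suc n * r * \<i> * cis t
      = (\<i> / r ^ n) * (p (r * cis t) / cis t ^ n)" for t
    using r by (simp add: field_simps)
  ultimately have "((\<lambda>t. (\<i> / r ^ n) * (p (r * cis t) / cis t ^ n)) has_integral
      (2 * pi * \<i> * coef p n)) {0..2*pi}"
    by simp
  then show ?thesis
    using r by (subst (asm) has_integral_mult_right_iff) (simp_all add: field_simps)
qed

lemma has_integral_circle_mult_cis_power:
  fixes p :: "complex \<Rightarrow> complex" and r :: real
  assumes hol: "p holomorphic_on ball 0 1" and r: "0 < r" "r < 1" and n: "n \<ge> 1"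
  shows "((\<lambda>t. p (r * cis t) * cis t ^ n) has_integral 0) {0..2*pi}"
proof -
  have "((\<lambda>u. p u * u ^ (n - 1)) has_contour_integral 0) (circlepath 0 r)"
    using r hol by (intro Cauchy_theorem_disc_simple[of _ 0 1]) (auto intro!: holomorphic_intros)
  then have "((\<lambda>t. p (r * cis t) * (r * cis t) ^ (n - 1) * r * \<i> * cis t) has_integral 0) {0..2*pi}"
    unfolding circlepath_def by (subst (asm) has_contour_integral_part_circlepath_iff) auto
  moreover have "p (r * cis t) * (r * cis t) ^ (n - 1) * r * \<i> * cis t
      = (\<i> * r ^ n) * (p (r * cis t) * cis t ^ n)" for t
    using n by (cases n) (auto simp: power_mult_distrib)
  ultimately have "((\<lambda>t. (\<i> * r ^ n) * (p (r * cis t) * cis t ^ n)) has_integral 0) {0..2*pi}"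
    by (simp only:)
  then show ?thesis
    using r by (subst (asm) has_integral_mult_right_iff) simp_all
qed

lemma caratheodory_coef_bound_circle:
  fixes p :: "complex \<Rightarrow> complex" and r :: real
  assumes hol: "p holomorphic_on ball 0 1" and pos: "\<forall>z\<in>ball 0 1. Re (p z) > 0"
    and n: "n \<ge> 1" and r: "0 < r" "r < 1"
  shows "r ^ n * cmod (coef p n) \<le> 2 * Re (p 0)"
proof -
  define P where "P t = p (r * cis t)" for t
  \<comment> \<open>Adding the conjugate of the vanishing integral does not change the integral, but turns
    the integrand into 2 Re P times a unimodular factor.\<close>
  have "(cnj \<circ> (\<lambda>t. P t * cis t ^ n) has_integral cnj 0) {0..2*pi}"
    unfolding has_integral_cnj P_def by (rule has_integral_circle_mult_cis_power[OF hol r n])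
  moreover have "cnj \<circ> (\<lambda>t. P t * cis t ^ n) = (\<lambda>t. cnj (P t) / cis t ^ n)"
    by (simp add: fun_eq_iff divide_inverse cis_cnj flip: power_inverse)
  ultimately have "((\<lambda>t. cnj (P t) / cis t ^ n) has_integral 0) {0..2*pi}"
    by simp
  from has_integral_add[OF has_integral_circle_div_cis_power[OF hol r, of n] this]
  have sum_int: "((\<lambda>t. (P t + cnj (P t)) / cis t ^ n) has_integral (2 * pi * r ^ n * coef p n)) {0..2*pi}"
    by (simp add: P_def add_divide_distrib)
  have Re_int: "((\<lambda>t. 2 * Re (P t)) has_integral (2 * (2 * pi * Re (p 0)))) {0..2*pi}"
    using has_integral_mult_right[OF has_integral_Re[OF has_integral_circle_div_cis_power[OF hol r, of 0]], of 2]
    by (simp add: P_def coef_def)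
  have bound: "norm ((P t + cnj (P t)) / cis t ^ n) \<le> 2 * Re (P t)" for t
  proof -
    have "Re (P t) > 0"
      using pos r by (simp add: P_def norm_mult)
    then show ?thesis
      by (simp add: complex_add_cnj norm_divide norm_power)
  qed
  have "norm (integral {0..2*pi} (\<lambda>t. (P t + cnj (P t)) / cis t ^ n))
      \<le> integral {0..2*pi} (\<lambda>t. 2 * Re (P t))"
    using sum_int Re_int bound by (intro integral_norm_bound_integral) blast+
  then have "norm (2 * pi * r ^ n * coef p n) \<le> 2 * (2 * pi * Re (p 0))"
    by (simp only: integral_unique[OF sum_int] integral_unique[OF Re_int])
  then show ?thesis
    using r by (simp add: norm_mult norm_power)
qed

lemma caratheodory_coef_bound:
  fixes p :: "complex \<Rightarrow> complex"
  assumes hol: "p holomorphic_on ball 0 1" and pos: "\<forall>z\<in>ball 0 1. Re (p z) > 0" and n: "n \<ge> 1"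
  shows "cmod (coef p n) \<le> 2 * Re (p 0)"
proof (rule tendsto_le[OF _ tendsto_const])
  show "((\<lambda>r. r ^ n * cmod (coef p n)) \<longlongrightarrow> cmod (coef p n)) (at_left 1)"
    by (auto intro!: tendsto_eq_intros)
  show "\<forall>\<^sub>F r in at_left 1. r ^ n * cmod (coef p n) \<le> 2 * Re (p 0)"
    using eventually_at_left_real[of 0 1] caratheodory_coef_bound_circle[OF hol pos n]
    by (auto elim!: eventually_mono)
qed simp

lemma fps_conv_radius_mono:
  fixes F G :: "'a::{banach, real_normed_div_algebra} fps"
  assumes "\<And>n. norm (G $ n) \<le> norm (F $ n)"
  shows "fps_conv_radius F \<le> fps_conv_radius G"
  unfolding fps_conv_radius_def
proof (rule conv_radius_geI_ex')
  fix r :: real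
  assume "0 < r" "ereal r < conv_radius (fps_nth F)"
  then have "summable (\<lambda>n. norm (F $ n * of_real r ^ n))"
    by (intro abs_summable_in_conv_radius) simp
  then show "summable (\<lambda>n. G $ n * of_real r ^ n)"
    by (rule summable_comparison_test'[where N = 0]) (simp add: norm_mult mult_right_mono assms)
qed

lemma fps_nth_eq_if_compose_nth_eq:
  fixes A B F :: "'a::idom fps"
  assumes F0: "F $ 0 = 0" and F1: "F $ 1 \<noteq> 0"
    and eq: "\<And>i. i < N \<Longrightarrow> (A oo F) $ i = (B oo F) $ i" and k: "k < N"
  shows "A $ k = B $ k"
  using k
proof (induction k rule: less_induct)
  case (less k)
  have split: "(C oo F) $ k = (\<Sum>i<k. C $ i * (F ^ i) $ k) + C $ k * (F $ 1) ^ k" for C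
    by (simp add: fps_compose_nth atLeast0AtMost lessThan_Suc_atMost[symmetric]
        startsby_zero_power_nth_same[OF F0])
  have "(\<Sum>i<k. A $ i * (F ^ i) $ k) = (\<Sum>i<k. B $ i * (F ^ i) $ k)"
    using less by (intro sum.cong) auto
  then have "A $ k * (F $ 1) ^ k = B $ k * (F $ 1) ^ k"
    using eq[OF less.prems] by (simp add: split)
  then show ?case
    using F1 by simp
qed

lemma one_add_power_eq_linear_add_square:
  fixes Y :: "'a::comm_ring_1"
  shows "\<exists>W. (1 + Y) ^ k = 1 + of_nat k * Y + Y^2 * W"
proof (induction k)
  case 0
  then show ?case by (intro exI[of _ 0]) simp
next
  case (Suc k)
  then obtain W where "(1 + Y) ^ k = 1 + of_nat k * Y + Y^2 * W" by blast
  then show ?case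
    by (intro exI[of _ "W + of_nat k + Y * W"]) (simp add: algebra_simps power2_eq_square)
qed

lemma fps_decomp_three_terms:
  fixes F :: "'a::comm_ring_1 fps"
  assumes m: "m \<ge> 1" and F1: "F $ 1 = 1"
    and Fz: "\<And>k. k < 2*m+2 \<Longrightarrow> k \<notin> {1, m+1, 2*m+1} \<Longrightarrow> F $ k = 0"
  shows "F = fps_X + fps_const (F $ (m+1)) * fps_X^(m+1) + fps_const (F $ (2*m+1)) * fps_X^(2*m+1)
      + fps_X^(2*m+2) * fps_shift (2*m+2) F"
proof (rule fps_ext)
  fix n
  show "F $ n = (fps_X + fps_const (F $ (m+1)) * fps_X^(m+1) + fps_const (F $ (2*m+1)) * fps_X^(2*m+1)
      + fps_X^(2*m+2) * fps_shift (2*m+2) F) $ n"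
    using m F1 Fz[of n] by (auto simp: fps_X_power_mult_nth Suc_diff_Suc numeral_2_eq_2 simp del: power_Suc)
qed

lemma fps_compose_approx_inverse:
  fixes a c :: "'a::idom" and F K :: "'a fps"
  assumes m: "m \<ge> 1"
    and F: "F = fps_X + fps_const a * fps_X^(m+1) + fps_const c * fps_X^(2*m+1) + fps_X^(2*m+2) * K"
  shows "\<exists>Q. (fps_X - fps_const a * fps_X^(m+1) + fps_const (of_nat (m+1) * a^2 - c) * fps_X^(2*m+1)) oo F
      = fps_X + fps_X^(2*m+2) * Q"
proof -
  \<comment> \<open>With Z = X^(m-1) all powers of X involved are monomials in X and Z, so the divisibility
    of the remainder by X^(2m+2) becomes a ring identity.\<close>
  obtain m' where m': "m = Suc m'" using m by (cases m) auto
  define X :: "'a fps" where "X = fps_X"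
  define Z where "Z = X ^ m'"
  define A where "A = fps_const a"
  define C where "C = fps_const c"
  define E where "E = of_nat (m+1) * A^2 - C"
  have E_const: "fps_const (of_nat (m+1) * a^2 - c) = E"
    unfolding E_def A_def C_def by (metis fps_const_sub fps_const_mult fps_const_power fps_of_nat)
  have "m+1 = 2 + m'" "2*m+1 = 3 + m'*2" "2*m+2 = 4 + m'*2"
    using m' by simp_all
  then have XZ: "X^(m+1) = X^2 * Z" "X^(2*m+1) = X^3 * Z^2" "X^(2*m+2) = X^4 * Z^2"
    unfolding Z_def by (simp_all only: power_add power_mult)
  define V where "V = A + X * Z * (C + X * K)"
  define Y where "Y = X * Z * V"
  have F_eq: "F = X * (1 + Y)"
    unfolding F X_def[symmetric] A_def[symmetric] C_def[symmetric] XZ Y_def V_def by algebra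
  have F0: "F $ 0 = 0"
    by (simp add: F)
  obtain W where W: "(1 + Y) ^ (m+1) = 1 + of_nat (m+1) * Y + Y^2 * W"
    using one_add_power_eq_linear_add_square by blast
  obtain W' where W': "(1 + Y) ^ (2*m+1) = 1 + of_nat (2*m+1) * Y + Y^2 * W'"
    using one_add_power_eq_linear_add_square by blast
  have "(fps_X - fps_const a * fps_X^(m+1) + fps_const (of_nat (m+1) * a^2 - c) * fps_X^(2*m+1)) oo F
      = F - A * F^(m+1) + fps_const (of_nat (m+1) * a^2 - c) * F^(2*m+1)"
    unfolding A_def
    by (simp add: fps_compose_add_distrib fps_compose_sub_distrib fps_compose_mult_distrib[OF F0]
        fps_X_power_compose[OF F0] F0)
  also have "\<dots> = X + X^(2*m+2) * (K - A * of_nat (m+1) * Z * (C + X * K) - A * Z * V^2 * W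
      + E * of_nat (2*m+1) * Z * V + E * X * Z^2 * V^2 * W')"
    unfolding E_const F_eq power_mult_distrib W W' XZ unfolding E_def Y_def V_def by algebra
  finally show ?thesis
    unfolding X_def by blast
qed

lemma fps_compose_inverse_nth:
  fixes F G :: "'a::idom fps"
  assumes m: "m \<ge> 1" and F1: "F $ 1 = 1"
    and Fz: "\<And>k. k < 2*m+2 \<Longrightarrow> k \<notin> {1, m+1, 2*m+1} \<Longrightarrow> F $ k = 0"
    and GF: "G oo F = fps_X"
  shows "G $ (2*m+1) = of_nat (m+1) * (F $ (m+1))^2 - F $ (2*m+1)"
proof -
  define G0 where "G0 = fps_X - fps_const (F $ (m+1)) * fps_X^(m+1)
      + fps_const (of_nat (m+1) * (F $ (m+1))^2 - F $ (2*m+1)) * fps_X^(2*m+1)"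
  obtain Q where Q: "G0 oo F = fps_X + fps_X^(2*m+2) * Q"
    using fps_compose_approx_inverse[OF m fps_decomp_three_terms[OF m F1 Fz]] unfolding G0_def by blast
  have F0: "F $ 0 = 0"
    using Fz[of 0] by simp
  have "G $ (2*m+1) = G0 $ (2*m+1)"
    by (rule fps_nth_eq_if_compose_nth_eq[OF F0, where N = "2*m+2"])
      (use F1 in \<open>simp_all add: GF Q fps_X_power_mult_nth del: power_Suc\<close>)
  then show ?thesis
    using m by (simp add: G0_def)
qed

lemma fps_nth_fps_expansion_0_eq_coef: "fps_expansion h 0 $ k = coef h k"
  by (simp add: fps_expansion_def coef_def)

lemma inv_extension_fps_compose:
  assumes g: "inv_extension f g" and holf: "f holomorphic_on ball 0 1" and f0: "f 0 = 0"
  shows "fps_expansion g 0 oo fps_expansion f 0 = fps_X"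
proof (rule fps_expansion_unique_complex)
  have holg: "g holomorphic_on ball 0 1" and gf: "\<And>z. z \<in> ball 0 1 \<Longrightarrow> f z \<in> ball 0 1 \<Longrightarrow> g (f z) = z"
    using g by (auto simp: inv_extension_def)
  have "open (ball 0 1 \<inter> f -` ball 0 1)"
    using holomorphic_on_imp_continuous_on[OF holf] by (auto intro: continuous_open_preimage)
  then have "eventually (\<lambda>z. z \<in> ball 0 1 \<inter> f -` ball 0 1) (nhds 0)"
    using f0 by (intro eventually_nhds_in_open) auto
  then have "eventually (\<lambda>z. (g \<circ> f) z = z) (nhds 0)"
    by (auto elim!: eventually_mono simp: gf)
  from has_fps_expansion_cong[OF this refl] show "(g \<circ> f) has_fps_expansion fps_X"
    using has_fps_expansion_fps_X by blast
  show "(g \<circ> f) has_fps_expansion (fps_expansion g 0 oo fps_expansion f 0)"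
    using holf holg f0
    by (intro has_fps_expansion_compose has_fps_expansion_fps_expansion) (auto simp: fps_expansion_def)
qed

lemma m_fold_index_lt:
  fixes m j :: nat
  assumes "m \<ge> 1" and "j \<ge> 1" and "m * j + 1 < 2 * m + 2"
  shows "j = 1 \<or> j = 2"
proof -
  have "m * j < m * 3"
    using assms by linarith
  then show ?thesis
    using assms(2) by auto
qed

lemma in_A_inverse_coef:
  assumes m: "m \<ge> 1" and f: "in_A m f" and g: "inv_extension f g"
  shows "coef g (2*m+1) = of_nat (m+1) * (coef f (m+1))^2 - coef f (2*m+1)"
proof -
  have holf: "f holomorphic_on ball 0 1" and f0: "coef f 0 = 0" and f1: "coef f 1 = 1"
    and fz: "\<And>k. k \<noteq> 1 \<Longrightarrow> \<not> (\<exists>j\<ge>1. k = m * j + 1) \<Longrightarrow> coef f k = 0"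
    using f by (auto simp: in_A_def)
  have "coef f k = 0" if k: "k < 2*m+2" "k \<notin> {1, m+1, 2*m+1}" for k
  proof (rule fz)
    show "\<not> (\<exists>j\<ge>1. k = m * j + 1)"
      using k m_fold_index_lt[OF m] by fastforce
  qed (use k in auto)
  moreover have "fps_expansion g 0 oo fps_expansion f 0 = fps_X"
    using inv_extension_fps_compose[OF g holf] f0 by (simp add: coef_def)
  ultimately show ?thesis
    using fps_compose_inverse_nth[OF m, of "fps_expansion f 0" "fps_expansion g 0"] f1
    by (simp add: fps_nth_fps_expansion_0_eq_coef)
qed

(* The Ruscheweyh derivative only reads the Taylor coefficients of index mk+1 (k >= 1) and puts 1
   in place of the linear one; for g, which need not be m-fold symmetric, this is all of g that J sees. *)
definition m_fold_part :: "nat \<Rightarrow> (complex \<Rightarrow> complex) \<Rightarrow> complex fps" where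
  "m_fold_part m h = fps_X + Abs_fps (\<lambda>k. if \<exists>j\<ge>1. k = m * j + 1 then coef h k else 0)"

lemma fps_conv_radius_m_fold_part:
  assumes "h holomorphic_on ball 0 1"
  shows "fps_conv_radius (m_fold_part m h) \<ge> 1"
proof -
  define T where "T = Abs_fps (\<lambda>k. if \<exists>j\<ge>1. k = m * j + 1 then coef h k else 0)"
  have "1 \<le> fps_conv_radius (fps_expansion h 0)"
    using conv_radius_fps_expansion[of h 0 1] assms by (simp add: one_ereal_def)
  also have "\<dots> \<le> fps_conv_radius T"
    by (rule fps_conv_radius_mono) (simp add: T_def fps_nth_fps_expansion_0_eq_coef)
  also have "\<dots> \<le> fps_conv_radius (fps_X + T)"
    using fps_conv_radius_add[of fps_X T] by simp
  finally show ?thesis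
    by (simp add: m_fold_part_def T_def)
qed

lemma ruscheweyh_0_eq_eval_m_fold_part:
  assumes m: "m \<ge> 1" and hol: "h holomorphic_on ball 0 1" and z: "z \<in> ball 0 1"
  shows "ruscheweyh m 0 h z = eval_fps (m_fold_part m h) z"
proof -
  define T where "T = Abs_fps (\<lambda>k. if \<exists>j\<ge>1. k = m * j + 1 then coef h k else 0)"
  define g where "g k = m * Suc k + 1" for k
  have rad: "norm z < fps_conv_radius T"
  proof -
    have "T = m_fold_part m h - fps_X"
      by (simp add: m_fold_part_def T_def)
    then have "1 \<le> fps_conv_radius T"
      using fps_conv_radius_m_fold_part[OF hol, of m] fps_conv_radius_diff[of "m_fold_part m h" fps_X]
      by simp
    then show ?thesis
      using z by (simp add: less_le_trans[of _ 1] one_ereal_def)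
  qed
  have "strict_mono g"
    unfolding g_def strict_mono_Suc_iff using m by simp
  moreover have "T $ k * z ^ k = 0" if "k \<notin> range g" for k
  proof -
    have "\<not> (\<exists>j\<ge>1. k = m * j + 1)"
    proof
      assume "\<exists>j\<ge>1. k = m * j + 1"
      then obtain j where "j \<ge> 1" "k = m * j + 1" by blast
      then have "k = g (j - 1)" by (simp add: g_def)
      with that show False by blast
    qed
    then show ?thesis by (auto simp: T_def)
  qed
  ultimately have "(\<lambda>k. T $ g k * z ^ g k) sums eval_fps T z"
    using sums_mono_reindex[of g "\<lambda>k. T $ k * z ^ k"] sums_eval_fps[OF rad] by blast
  moreover have "T $ g k = coef h (m * Suc k + 1)" for k
    by (auto simp: T_def g_def)
  ultimately have "(\<lambda>k. coef h (m * Suc k + 1) * z ^ (m * Suc k + 1)) sums eval_fps T z"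
    by (simp add: g_def)
  then have "ruscheweyh m 0 h z = z + eval_fps T z"
    by (simp add: ruscheweyh_def sums_iff)
  also have "\<dots> = eval_fps (m_fold_part m h) z"
    using rad by (simp add: m_fold_part_def T_def eval_fps_add)
  finally show ?thesis .
qed

lemma m_fold_part_nth:
  assumes "m \<ge> 1"
  shows "m_fold_part m h $ 0 = 0" and "m_fold_part m h $ 1 = 1"
    and "m dvd n \<Longrightarrow> n \<ge> 1 \<Longrightarrow> m_fold_part m h $ (n + 1) = coef h (n + 1)"
  using assms by (auto simp: m_fold_part_def elim!: dvdE)

lemma J_fun_0_0_eq_eval_fps:
  assumes m: "m \<ge> 1" and hol: "h holomorphic_on ball 0 1" and z: "z \<in> ball 0 1"
  defines "H \<equiv> m_fold_part m h"
  shows "J_fun m \<tau> lam 0 0 h z = 1 + (1 / \<tau>) * ((1 - of_real lam) * eval_fps (fps_shift 1 H) z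
      + of_real lam * eval_fps (fps_deriv H) z - 1)"
proof -
  have rad: "norm w < fps_conv_radius H" if "w \<in> ball 0 1" for w
    using that fps_conv_radius_m_fold_part[OF hol, of m]
    by (simp add: H_def less_le_trans[of _ 1] one_ereal_def)
  have R: "ruscheweyh m 0 h w = eval_fps H w" if "w \<in> ball 0 1" for w
    using ruscheweyh_0_eq_eval_m_fold_part[OF m hol that] by (simp add: H_def)
  have "deriv (ruscheweyh m 0 h) z = deriv (eval_fps H) z"
    using eventually_nhds_in_open[OF open_ball z] by (intro deriv_cong_ev) (auto elim!: eventually_mono simp: R)
  also have "\<dots> = eval_fps (fps_deriv H) z"
    using rad[OF z] by (simp add: eval_fps_deriv)
  finally have deriv_R: "deriv (ruscheweyh m 0 h) z = eval_fps (fps_deriv H) z" .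
  have "1 \<le> subdegree H"
    using m_fold_part_nth[OF m, where h = h] by (intro subdegree_geI) (auto simp: H_def)
  then have quot_R: "(if z = 0 then 1 else ruscheweyh m 0 h z / z) = eval_fps (fps_shift 1 H) z"
    using m_fold_part_nth[OF m, where h = h] rad[OF z] by (simp add: eval_fps_shift R[OF z] H_def)
  show ?thesis
    by (simp add: J_fun_def Let_def deriv_R quot_R)
qed

lemma J_fun_coef_bound:
  fixes h :: "complex \<Rightarrow> complex" and lam \<beta> :: real
  assumes m: "m \<ge> 1" and hol: "h holomorphic_on ball 0 1" and tau: "\<tau> \<noteq> 0"
    and pos: "\<forall>z\<in>ball 0 1. Re (J_fun m \<tau> lam 0 0 h z) > \<beta>"
    and n: "n \<ge> 1" "m dvd n"
  shows "\<bar>1 + n * lam\<bar> * cmod (coef h (n + 1)) \<le> 2 * (1 - \<beta>) * cmod \<tau>"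
proof -
  define H where "H = m_fold_part m h"
  define p where "p z = 1 + (1 / \<tau>) * ((1 - of_real lam) * eval_fps (fps_shift 1 H) z
      + of_real lam * eval_fps (fps_deriv H) z - 1) - \<beta>" for z
  define P where "P = 1 + fps_const (1 / \<tau>) * (fps_const (1 - of_real lam) * fps_shift 1 H
      + fps_const (of_real lam) * fps_deriv H - 1) - fps_const (of_real \<beta>)"
  have "1 \<le> fps_conv_radius H"
    using fps_conv_radius_m_fold_part[OF hol] by (simp add: H_def)
  then have rad: "1 \<le> fps_conv_radius (fps_shift 1 H)" "1 \<le> fps_conv_radius (fps_deriv H)"
    using fps_conv_radius_deriv[of H] by simp_all
  have "ball 0 1 \<subseteq> eball 0 R" if "1 \<le> R" for R :: ereal
    using that by (auto simp: less_le_trans[of _ 1] one_ereal_def)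
  then have "p holomorphic_on ball 0 1"
    unfolding p_def using rad by (intro holomorphic_intros holomorphic_on_eval_fps) auto
  moreover have "\<forall>z\<in>ball 0 1. Re (p z) > 0"
    using pos J_fun_0_0_eq_eval_fps[OF m hol] by (simp add: p_def H_def)
  ultimately have bound: "cmod (coef p n) \<le> 2 * Re (p 0)"
    using n(1) by (rule caratheodory_coef_bound)
  have p0: "p 0 = 1 - \<beta>"
    using m_fold_part_nth[OF m, where h = h] tau by (simp add: p_def H_def eval_fps_at_0 field_simps)
  have "p has_fps_expansion P"
    unfolding p_def P_def using rad
    by (intro fps_expansion_intros eval_fps_has_fps_expansion) (auto simp: less_le_trans[of 0 1])
  then have "coef p n = P $ n"
    by (simp add: coef_def fps_nth_fps_expansion)
  also have "\<dots> = of_real (1 + n * lam) * coef h (n + 1) / \<tau>"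
    using n tau m_fold_part_nth(3)[OF m n(2) n(1), where h = h] by (simp add: P_def H_def field_simps)
  finally have "cmod (of_real (1 + n * lam) * coef h (n + 1) / \<tau>) \<le> 2 * (1 - \<beta>)"
    using bound p0 by simp
  then show ?thesis
    using tau unfolding norm_mult norm_divide norm_of_real by (simp add: divide_le_eq)
qed

lemma le_two_sqrt_if_square_le_sum:
  fixes x k s b c M :: real
  assumes k: "0 < k" and s: "0 < s" and x: "k * x^2 \<le> b + c"
    and b: "s * b \<le> 2 * M" and c: "s * c \<le> 2 * M"
  shows "x \<le> 2 * sqrt (M / (k * s))"
proof -
  have "s * (k * x^2) \<le> s * (b + c)"
    using x s by (intro mult_left_mono) auto
  then have "x^2 \<le> 4 * (M / (k * s))"
    using k s b c by (simp add: field_simps)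
  then have "x \<le> sqrt (4 * (M / (k * s)))"
    by (rule real_le_rsqrt)
  also have "\<dots> = 2 * sqrt (M / (k * s))"
    using real_sqrt_mult[of 4 "M / (k * s)"] by simp
  finally show ?thesis .
qed

theorem corollary2:
  fixes m :: nat and \<tau> :: complex and lam \<beta> :: real and f :: "complex \<Rightarrow> complex"
  assumes "m \<ge> 1" and "lam \<ge> 0" and "0 \<le> \<beta>" and "\<beta> < 1" and "\<tau> \<noteq> 0"
    and "Theta_Sigma m \<tau> lam 0 0 \<beta> f"
  shows "cmod (coef f (m + 1)) \<le> min (2 * cmod \<tau> * (1 - \<beta>) / (1 + m * lam))
            (2 * sqrt (cmod \<tau> * (1 - \<beta>) / ((m + 1) * (1 + 2 * m * lam))))
     \<and> cmod (coef f (2 * m + 1)) \<le> 2 * cmod \<tau> * (1 - \<beta>) / (1 + 2 * m * lam)"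
proof -
  note m = assms(1) and lam = assms(2) and tau = assms(5)
  obtain g where f: "in_A m f" and g: "inv_extension f g"
    and posf: "\<forall>z\<in>ball 0 1. Re (J_fun m \<tau> lam 0 0 f z) > \<beta>"
    and posg: "\<forall>w\<in>ball 0 1. Re (J_fun m \<tau> lam 0 0 g w) > \<beta>"
    using assms(6) by (auto simp: Theta_Sigma_def Sigma_m_def)
  have holf: "f holomorphic_on ball 0 1" and holg: "g holomorphic_on ball 0 1"
    using f g by (simp_all add: in_A_def inv_extension_def)
  define a b c where "a = coef f (m + 1)" and "b = coef g (2 * m + 1)" and "c = coef f (2 * m + 1)"
  have x1: "1 + m * lam > 0" and x2: "1 + 2 * m * lam > 0"
    using lam by (simp_all add: add_pos_nonneg)
  have bound_a: "(1 + m * lam) * cmod a \<le> 2 * (cmod \<tau> * (1 - \<beta>))"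
    and bound_c: "(1 + 2 * m * lam) * cmod c \<le> 2 * (cmod \<tau> * (1 - \<beta>))"
    and bound_b: "(1 + 2 * m * lam) * cmod b \<le> 2 * (cmod \<tau> * (1 - \<beta>))"
    using J_fun_coef_bound[OF m holf tau posf, of m] J_fun_coef_bound[OF m holf tau posf, of "2 * m"]
      J_fun_coef_bound[OF m holg tau posg, of "2 * m"] m x1 x2
    by (simp_all add: a_def b_def c_def mult_ac)
  have "of_nat (m + 1) * a ^ 2 = b + c"
    using in_A_inverse_coef[OF m f g] by (simp add: a_def b_def c_def)
  then have "(m + 1) * cmod a ^ 2 \<le> cmod b + cmod c"
    by (metis norm_mult norm_of_nat norm_power norm_triangle_ineq)
  from le_two_sqrt_if_square_le_sum[OF _ x2 this bound_b bound_c] show ?thesis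
    using bound_a bound_c x1 x2 by (simp add: a_def c_def pos_le_divide_eq mult_ac)
qed

end
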